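(* Let $\mathcal{LS}_{\mathfrak{B}_1}\langle X\rangle$ be the free algebra over a field of characteristic $0$ in the variety of left-symmetric algebras satisfying $(ab)c-(ba)c-(ac)b+(ca)b+(bc)a-(cb)a=0$, and equip it with the commutator $[a,b]=ab-ba$. Then every polynomial identity of degree at most $4$ satisfied by $(\mathcal{LS}_{\mathfrak{B}_1}\langle X\rangle,[\cdot,\cdot])$ is a consequence of anticommutativity and the Jacobi identity.
   Context: A left-symmetric algebra is an algebra with $(a,b,c)=(b,a,c)$, where $(a,b,c)=(ab)c-a(bc)$. *)

theory Defs
  imports Main
begin

text \<open>Nonassociative monomials (binary trees) in the countably many variables x_0, x_1, ...\<close>
datatype mon = V nat | M mon mon

fun mdeg :: "mon \<Rightarrow> nat" where
  "mdeg (V i) = 1"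
| "mdeg (M s t) = mdeg s + mdeg t"

text \<open>Elements of the free nonassociative algebra K{X}: finitely supported coefficient functions.\<close>
type_synonym 'k npoly = "mon \<Rightarrow> 'k"

definition fin_supp :: "'k::zero npoly \<Rightarrow> bool" where
  "fin_supp p \<longleftrightarrow> finite {t. p t \<noteq> 0}"

definition padd :: "'k::field npoly \<Rightarrow> 'k npoly \<Rightarrow> 'k npoly" where
  "padd p q = (\<lambda>t. p t + q t)"

definition psc :: "'k::field \<Rightarrow> 'k npoly \<Rightarrow> 'k npoly" where
  "psc c p = (\<lambda>t. c * p t)"

definition psub :: "'k::field npoly \<Rightarrow> 'k npoly \<Rightarrow> 'k npoly" where
  "psub p q = padd p (psc (-1) q)"

definition pzero :: "'k::field npoly" where
  "pzero = (\<lambda>t. 0)"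

text \<open>Product of the free magma algebra: the monomial M s u arises uniquely from s and u.\<close>
definition pmul :: "'k::field npoly \<Rightarrow> 'k npoly \<Rightarrow> 'k npoly" where
  "pmul p q = (\<lambda>t. case t of V _ \<Rightarrow> 0 | M s u \<Rightarrow> p s * q u)"

definition pcomm :: "'k::field npoly \<Rightarrow> 'k npoly \<Rightarrow> 'k npoly" where
  "pcomm p q = psub (pmul p q) (pmul q p)"

definition passoc :: "'k::field npoly \<Rightarrow> 'k npoly \<Rightarrow> 'k npoly \<Rightarrow> 'k npoly" where
  "passoc a b c = psub (pmul (pmul a b) c) (pmul a (pmul b c))"

definition lsym_rel :: "'k::field npoly \<Rightarrow> 'k npoly \<Rightarrow> 'k npoly \<Rightarrow> 'k npoly" where
  "lsym_rel a b c = psub (passoc a b c) (passoc b a c)"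

definition B1_rel :: "'k::field npoly \<Rightarrow> 'k npoly \<Rightarrow> 'k npoly \<Rightarrow> 'k npoly" where
  "B1_rel a b c =
     padd (psub (pmul (pmul a b) c) (pmul (pmul b a) c))
     (padd (psub (pmul (pmul c a) b) (pmul (pmul a c) b))
           (psub (pmul (pmul b c) a) (pmul (pmul c b) a)))"

text \<open>The T-ideal of K{X} defining the variety LS_B1 (so LS_B1<X> = K{X} / LSB1_ideal).\<close>
inductive_set LSB1_ideal :: "'k::field npoly set" where
  gen_ls: "\<lbrakk>fin_supp a; fin_supp b; fin_supp c\<rbrakk> \<Longrightarrow> lsym_rel a b c \<in> LSB1_ideal"
| gen_B1: "\<lbrakk>fin_supp a; fin_supp b; fin_supp c\<rbrakk> \<Longrightarrow> B1_rel a b c \<in> LSB1_ideal"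
| zero: "pzero \<in> LSB1_ideal"
| add: "\<lbrakk>p \<in> LSB1_ideal; q \<in> LSB1_ideal\<rbrakk> \<Longrightarrow> padd p q \<in> LSB1_ideal"
| smult: "p \<in> LSB1_ideal \<Longrightarrow> psc c p \<in> LSB1_ideal"
| mult_left: "\<lbrakk>p \<in> LSB1_ideal; fin_supp a\<rbrakk> \<Longrightarrow> pmul a p \<in> LSB1_ideal"
| mult_right: "\<lbrakk>p \<in> LSB1_ideal; fin_supp a\<rbrakk> \<Longrightarrow> pmul p a \<in> LSB1_ideal"

inductive_set Lie_ideal :: "'k::field npoly set" where
  gen_anti: "\<lbrakk>fin_supp a; fin_supp b\<rbrakk> \<Longrightarrow> padd (pmul a b) (pmul b a) \<in> Lie_ideal"
| gen_jac: "\<lbrakk>fin_supp a; fin_supp b; fin_supp c\<rbrakk> \<Longrightarrow>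
     padd (pmul (pmul a b) c) (padd (pmul (pmul b c) a) (pmul (pmul c a) b)) \<in> Lie_ideal"
| zero: "pzero \<in> Lie_ideal"
| add: "\<lbrakk>p \<in> Lie_ideal; q \<in> Lie_ideal\<rbrakk> \<Longrightarrow> padd p q \<in> Lie_ideal"
| smult: "p \<in> Lie_ideal \<Longrightarrow> psc c p \<in> Lie_ideal"
| mult_left: "\<lbrakk>p \<in> Lie_ideal; fin_supp a\<rbrakk> \<Longrightarrow> pmul a p \<in> Lie_ideal"
| mult_right: "\<lbrakk>p \<in> Lie_ideal; fin_supp a\<rbrakk> \<Longrightarrow> pmul p a \<in> Lie_ideal"

fun mev :: "('k npoly \<Rightarrow> 'k npoly \<Rightarrow> 'k npoly) \<Rightarrow> (nat \<Rightarrow> 'k npoly) \<Rightarrow> mon \<Rightarrow> 'k npoly" where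
  "mev op \<sigma> (V i) = \<sigma> i"
| "mev op \<sigma> (M s t) = op (mev op \<sigma> s) (mev op \<sigma> t)"

definition pev :: "('k::field npoly \<Rightarrow> 'k npoly \<Rightarrow> 'k npoly) \<Rightarrow> (nat \<Rightarrow> 'k npoly) \<Rightarrow> 'k npoly \<Rightarrow> 'k npoly" where
  "pev op \<sigma> f = (\<lambda>u. \<Sum>t\<in>{t. f t \<noteq> 0}. f t * mev op \<sigma> t u)"

text \<open>f is a polynomial identity of (LS_B1<X>, [.,.]): every substitution of elements of
  LS_B1<X> (represented by elements of K{X}), with the product read as the commutator,
  gives zero in LS_B1<X>, i.e. lands in LSB1_ideal.\<close>
definition is_identity_LSB1_comm :: "'k::field npoly \<Rightarrow> bool" where
  "is_identity_LSB1_comm f \<longleftrightarrow>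
     (\<forall>\<sigma>. (\<forall>i. fin_supp (\<sigma> i)) \<longrightarrow> pev pcomm \<sigma> f \<in> LSB1_ideal)"

end

theory Submission
  imports
    Defs HOL.Modules "HOL-Library.Multiset" "HOL-Library.Poly_Mapping"
    "HOL-Library.Function_Algebras"
begin

(*
  Differential polynomials K[x_i^(j)], with the derivation raising j and the product
  a o b = a * b', form a Novikov algebra: o is left-symmetric and (a o b) o c = a b' c' is
  symmetric in b and c, so the B1 identity holds as well. Sending x_i to x_i^(0) therefore
  factors through LS_B1<X>, and an identity f of (LS_B1<X>, [.,.]) vanishes after replacing
  each monomial t of f by its image E(t) under the commutator of o.

  A linear retraction Psi from differential polynomials back to K{X}, obtained by summing four
  explicit values over all orderings of each monomial, satisfies Psi (E t) = 12 t modulo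
  anticommutativity and Jacobi for every t of degree at most 4. Up to renaming variables there
  are nine tree shapes, and each is checked by evaluation against an explicit certificate.
  Applying Psi to the vanishing sum gives 12 f in Lie_ideal, and characteristic 0 finishes.
*)

definition lin_ext :: "('k \<Rightarrow> 'b \<Rightarrow> 'b) \<Rightarrow> ('a \<Rightarrow> 'b) \<Rightarrow> ('a \<Rightarrow> 'k::zero) \<Rightarrow> 'b::comm_monoid_add" where
  "lin_ext scale g p = (\<Sum>a\<in>{a. p a \<noteq> 0}. scale (p a) (g a))"

context module
begin

lemma lin_ext_eq_sum:
  assumes "finite A" "{a. p a \<noteq> 0} \<subseteq> A"
  shows "lin_ext scale g p = (\<Sum>a\<in>A. p a *s g a)"
  unfolding lin_ext_def by (rule sum.mono_neutral_left) (use assms in auto)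

lemma lin_ext_add:
  assumes "finite {a. p a \<noteq> 0}" "finite {a. q a \<noteq> 0}"
  shows "lin_ext scale g (p + q) = lin_ext scale g p + lin_ext scale g q"
proof -
  let ?A = "{a. p a \<noteq> 0} \<union> {a. q a \<noteq> 0}"
  have "lin_ext scale g (p + q) = (\<Sum>a\<in>?A. (p + q) a *s g a)"
    by (rule lin_ext_eq_sum) (use assms in auto)
  also have "\<dots> = (\<Sum>a\<in>?A. p a *s g a) + (\<Sum>a\<in>?A. q a *s g a)"
    by (simp add: scale_left_distrib sum.distrib)
  also have "\<dots> = lin_ext scale g p + lin_ext scale g q"
    using assms by (simp add: lin_ext_eq_sum[of ?A p] lin_ext_eq_sum[of ?A q])
  finally show ?thesis .
qed

lemma lin_ext_scale:
  assumes "finite {a. p a \<noteq> 0}"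
  shows "lin_ext scale g (\<lambda>a. c * p a) = c *s lin_ext scale g p"
proof -
  have "lin_ext scale g (\<lambda>a. c * p a) = (\<Sum>a\<in>{a. p a \<noteq> 0}. (c * p a) *s g a)"
    by (rule lin_ext_eq_sum) (use assms in auto)
  then show ?thesis by (simp add: lin_ext_def scale_sum_right)
qed

lemma lin_ext_uminus: "lin_ext scale g (- p) = - lin_ext scale g p"
  by (simp add: lin_ext_def sum_negf)

lemma lin_ext_delta: "lin_ext scale g (\<lambda>a. if a = a0 then c else 0) = c *s g a0"
  by (subst lin_ext_eq_sum[of "{a0}"]) auto

lemma lin_ext_diff: "lin_ext scale (\<lambda>a. g a - h a) p = lin_ext scale g p - lin_ext scale h p"
  by (simp add: lin_ext_def scale_right_diff_distrib sum_subtractf)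

end

lemma (in module_hom) lin_ext_compose: "f (lin_ext s1 g p) = lin_ext s2 (\<lambda>a. f (g a)) p"
  by (simp add: lin_ext_def sum scale)

lemma padd_eq_plus: "padd p q = p + q"
  by (simp add: padd_def fun_eq_iff)

lemma psub_eq_minus: "psub p q = p - q"
  by (simp add: psub_def padd_def psc_def fun_eq_iff)

lemma pzero_eq_zero: "pzero = 0"
  by (simp add: pzero_def fun_eq_iff)

lemma pcomm_eq: "pcomm p q = pmul p q - pmul q p"
  by (simp add: pcomm_def psub_eq_minus)

interpretation psc: module "psc :: 'k::field \<Rightarrow> 'k npoly \<Rightarrow> 'k npoly"
  by unfold_locales (simp_all add: psc_def fun_eq_iff algebra_simps)

definition pbasis :: "mon \<Rightarrow> 'k::field npoly" where
  "pbasis t = (\<lambda>u. if u = t then 1 else 0)"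

lemma fin_supp_plus:
  fixes p q :: "'k::comm_monoid_add npoly"
  shows "fin_supp p \<Longrightarrow> fin_supp q \<Longrightarrow> fin_supp (p + q)"
  unfolding fin_supp_def
  by (rule finite_subset[of _ "{t. p t \<noteq> 0} \<union> {t. q t \<noteq> 0}"]) auto

lemma fin_supp_zero: "fin_supp 0"
  by (simp add: fin_supp_def)

lemma fin_supp_psc: "fin_supp p \<Longrightarrow> fin_supp (psc c p)"
  unfolding fin_supp_def psc_def
  by (rule finite_subset[of _ "{t. p t \<noteq> 0}"]) auto

lemma fin_supp_uminus: "fin_supp (p :: 'k::group_add npoly) \<Longrightarrow> fin_supp (- p)"
  by (simp add: fin_supp_def)

lemma fin_supp_minus:
  fixes p q :: "'k::ab_group_add npoly"
  shows "fin_supp p \<Longrightarrow> fin_supp q \<Longrightarrow> fin_supp (p - q)"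
  using fin_supp_plus[of p "- q"] by (simp add: fin_supp_uminus)

lemma fin_supp_pbasis: "fin_supp (pbasis t)"
  unfolding fin_supp_def pbasis_def
  by (rule finite_subset[of _ "{t}"]) auto

lemma fin_supp_sum:
  "(\<And>i. i \<in> I \<Longrightarrow> fin_supp (g i :: 'k::comm_monoid_add npoly)) \<Longrightarrow> fin_supp (\<Sum>i\<in>I. g i)"
  by (induction I rule: infinite_finite_induct) (simp_all add: fin_supp_plus fin_supp_zero)

lemma support_pmul_subset:
  "{t. pmul p q t \<noteq> 0} \<subseteq> (\<lambda>(s, u). M s u) ` ({s. p s \<noteq> 0} \<times> {u. q u \<noteq> 0})"
proof
  fix t
  assume "t \<in> {t. pmul p q t \<noteq> 0}"
  then show "t \<in> (\<lambda>(s, u). M s u) ` ({s. p s \<noteq> 0} \<times> {u. q u \<noteq> 0})"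
    by (cases t) (auto simp: pmul_def)
qed

lemma fin_supp_pmul: "fin_supp p \<Longrightarrow> fin_supp q \<Longrightarrow> fin_supp (pmul p q)"
  unfolding fin_supp_def using support_pmul_subset
  by (metis finite_SigmaI finite_imageI finite_subset)

lemma pmul_add_right: "pmul p (q + r) = pmul p q + pmul p r"
  by (auto simp: pmul_def fun_eq_iff distrib_left split: mon.split)

lemma pmul_psc_right: "pmul p (psc c q) = psc c (pmul p q)"
  by (auto simp: pmul_def psc_def fun_eq_iff split: mon.split)

lemma pmul_pbasis: "pmul (pbasis s) (pbasis u) = pbasis (M s u)"
  by (auto simp: pmul_def pbasis_def fun_eq_iff split: mon.split)

lemma Lie_ideal_zero: "0 \<in> Lie_ideal"
  using Lie_ideal.zero by (simp add: pzero_eq_zero)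

lemma Lie_ideal_plus: "p \<in> Lie_ideal \<Longrightarrow> q \<in> Lie_ideal \<Longrightarrow> p + q \<in> Lie_ideal"
  using Lie_ideal.add by (simp add: padd_eq_plus)

lemma Lie_ideal_sum: "(\<And>i. i \<in> I \<Longrightarrow> g i \<in> Lie_ideal) \<Longrightarrow> sum g I \<in> Lie_ideal"
  by (induction I rule: infinite_finite_induct) (auto simp: Lie_ideal_zero Lie_ideal_plus)

lemma Lie_ideal_sum_list: "(\<And>p. p \<in> set ps \<Longrightarrow> p \<in> Lie_ideal) \<Longrightarrow> sum_list ps \<in> Lie_ideal"
  by (induction ps) (auto simp: Lie_ideal_zero Lie_ideal_plus)

lemma sum_apply: "(\<Sum>i\<in>I. f i) x = (\<Sum>i\<in>I. f i x)"
  by (induction I rule: infinite_finite_induct) auto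

lemma lin_ext_pbasis: "fin_supp p \<Longrightarrow> lin_ext psc pbasis p = p"
  unfolding fin_supp_def lin_ext_def pbasis_def psc_def
  by (simp add: fun_eq_iff sum_apply if_distrib[of "(*) _"] sum.delta' cong: if_cong)

fun rename_mon :: "(nat \<Rightarrow> nat) \<Rightarrow> mon \<Rightarrow> mon" where
  "rename_mon \<rho> (V i) = V (\<rho> i)"
| "rename_mon \<rho> (M s u) = M (rename_mon \<rho> s) (rename_mon \<rho> u)"

section \<open>Differential polynomials and the Novikov product\<close>

(* (i, j) stands for x_i^(j), the j-th derivative of the variable x_i. *)
type_synonym 'k dpoly = "(nat \<times> nat) multiset \<Rightarrow>\<^sub>0 'k"

definition dpoly_scale :: "'k::comm_ring_1 \<Rightarrow> 'k dpoly \<Rightarrow> 'k dpoly" where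
  "dpoly_scale c p = Poly_Mapping.single {#} c * p"

interpretation dpoly_scale: module "dpoly_scale :: 'k::comm_ring_1 \<Rightarrow> 'k dpoly \<Rightarrow> 'k dpoly"
  by unfold_locales
    (simp_all add: dpoly_scale_def algebra_simps single_add mult_single flip: mult.assoc)

lemma lookup_dpoly_scale:
  "Poly_Mapping.lookup (dpoly_scale c p) = (\<lambda>m. c * Poly_Mapping.lookup p m)"
  unfolding dpoly_scale_def zero_multiset.abs_eq[symmetric]
  by (simp add: mult_map_scale_conv_mult[symmetric] Poly_Mapping.map.rep_eq when_def fun_eq_iff)

lemma dpoly_scale_mult_left: "dpoly_scale c (p * q) = dpoly_scale c p * q"
  by (simp add: dpoly_scale_def mult.assoc)

lemma dpoly_scale_mult_right: "dpoly_scale c (p * q) = p * dpoly_scale c q"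
  by (simp add: dpoly_scale_def mult.left_commute)

lemma dpoly_scale_single: "dpoly_scale c (Poly_Mapping.single m d) = Poly_Mapping.single m (c * d)"
  by (simp add: dpoly_scale_def mult_single)

lemma lookup_plus_fun: "Poly_Mapping.lookup (p + q) = Poly_Mapping.lookup p + Poly_Mapping.lookup q"
  by (simp add: fun_eq_iff lookup_add)

lemma poly_mapping_sum_single:
  "p = (\<Sum>m\<in>Poly_Mapping.keys p. Poly_Mapping.single m (Poly_Mapping.lookup p m))"
  by (rule poly_mapping_eqI) (simp add: lookup_sum lookup_single when_def in_keys_iff)

lemma lin_ext_lookup_single:
  "lin_ext dpoly_scale g (Poly_Mapping.lookup (Poly_Mapping.single m c)) = dpoly_scale c (g m)"
proof -
  have "Poly_Mapping.lookup (Poly_Mapping.single m c) = (\<lambda>a. if a = m then c else 0)"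
    by (auto simp: lookup_single when_def)
  then show ?thesis by (simp add: dpoly_scale.lin_ext_delta)
qed

definition dshift :: "nat \<times> nat \<Rightarrow> nat \<times> nat" where
  "dshift x = (fst x, Suc (snd x))"

definition monom_deriv :: "(nat \<times> nat) multiset \<Rightarrow> 'k::comm_ring_1 dpoly" where
  "monom_deriv m = (\<Sum>x\<in>#m. Poly_Mapping.single (add_mset (dshift x) (m - {#x#})) 1)"

definition dpoly_deriv :: "'k::comm_ring_1 dpoly \<Rightarrow> 'k dpoly" where
  "dpoly_deriv p = lin_ext dpoly_scale monom_deriv (Poly_Mapping.lookup p)"

lemma dpoly_deriv_add: "dpoly_deriv (p + q) = dpoly_deriv p + dpoly_deriv q"
  by (simp add: dpoly_deriv_def lookup_plus_fun dpoly_scale.lin_ext_add)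

lemma dpoly_deriv_scale: "dpoly_deriv (dpoly_scale c p) = dpoly_scale c (dpoly_deriv p)"
  by (simp add: dpoly_deriv_def lookup_dpoly_scale dpoly_scale.lin_ext_scale)

interpretation dpoly_deriv:
  module_hom dpoly_scale dpoly_scale "dpoly_deriv :: 'k::comm_ring_1 dpoly \<Rightarrow> _"
  by unfold_locales (simp_all add: dpoly_deriv_add dpoly_deriv_scale)

lemma dpoly_deriv_single: "dpoly_deriv (Poly_Mapping.single m c) = dpoly_scale c (monom_deriv m)"
  by (simp add: dpoly_deriv_def lin_ext_lookup_single)

lemma monom_deriv_add:
  "(monom_deriv (m1 + m2) :: 'k::comm_ring_1 dpoly) =
     monom_deriv m1 * Poly_Mapping.single m2 1 + Poly_Mapping.single m1 1 * monom_deriv m2"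
proof -
  have "(\<Sum>x\<in>#m1. Poly_Mapping.single (add_mset (dshift x) (m1 + m2 - {#x#})) (1::'k))
      = (\<Sum>x\<in>#m1. Poly_Mapping.single (add_mset (dshift x) (m1 - {#x#})) 1
          * Poly_Mapping.single m2 1)"
    by (intro arg_cong[where f = sum_mset] image_mset_cong) (simp add: mult_single)
  moreover have "(\<Sum>x\<in>#m2. Poly_Mapping.single (add_mset (dshift x) (m1 + m2 - {#x#})) (1::'k))
      = (\<Sum>x\<in>#m2. Poly_Mapping.single m1 1
          * Poly_Mapping.single (add_mset (dshift x) (m2 - {#x#})) 1)"
    by (intro arg_cong[where f = sum_mset] image_mset_cong) (simp add: mult_single add.commute)
  ultimately show ?thesis
    by (simp add: monom_deriv_def sum_mset_distrib_left sum_mset_distrib_right)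
qed

lemma dpoly_deriv_mult_single:
  "dpoly_deriv (Poly_Mapping.single m1 c1 * Poly_Mapping.single m2 c2) =
     dpoly_deriv (Poly_Mapping.single m1 c1) * Poly_Mapping.single m2 c2
     + Poly_Mapping.single m1 c1 * dpoly_deriv (Poly_Mapping.single m2 c2)"
  by (simp add: mult_single dpoly_deriv_single monom_deriv_add dpoly_scale_def algebra_simps)

lemma dpoly_deriv_mult: "dpoly_deriv (p * q) = dpoly_deriv p * q + p * dpoly_deriv q"
proof -
  let ?s = "\<lambda>p m. Poly_Mapping.single m (Poly_Mapping.lookup p m)"
  have "p * q = (\<Sum>m1\<in>Poly_Mapping.keys p. \<Sum>m2\<in>Poly_Mapping.keys q. ?s p m1 * ?s q m2)"
    by (subst (1 2) poly_mapping_sum_single) (rule sum_product)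
  then have "dpoly_deriv (p * q)
      = (\<Sum>m1\<in>Poly_Mapping.keys p. \<Sum>m2\<in>Poly_Mapping.keys q.
          dpoly_deriv (?s p m1) * ?s q m2 + ?s p m1 * dpoly_deriv (?s q m2))"
    by (simp add: dpoly_deriv.sum dpoly_deriv_mult_single)
  also have "\<dots> =
      (\<Sum>m1\<in>Poly_Mapping.keys p. dpoly_deriv (?s p m1)) * (\<Sum>m2\<in>Poly_Mapping.keys q. ?s q m2)
      + (\<Sum>m1\<in>Poly_Mapping.keys p. ?s p m1) * (\<Sum>m2\<in>Poly_Mapping.keys q. dpoly_deriv (?s q m2))"
    by (simp add: sum.distrib sum_product)
  also have "\<dots> = dpoly_deriv p * q + p * dpoly_deriv q"
    by (simp add: dpoly_deriv.sum[symmetric] flip: poly_mapping_sum_single)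
  finally show ?thesis .
qed

definition novikov :: "'k::comm_ring_1 dpoly \<Rightarrow> 'k dpoly \<Rightarrow> 'k dpoly" where
  "novikov a b = a * dpoly_deriv b"

lemma derivation_product_left_symmetric:
  fixes D :: "'a::comm_ring \<Rightarrow> 'a"
  assumes "\<And>x y. D (x * y) = D x * y + x * D y"
  shows "(a * D b) * D c - a * D (b * D c) = (b * D a) * D c - b * D (a * D c)"
  by (simp add: assms algebra_simps)

section \<open>The Novikov representation\<close>

fun novikov_monom :: "mon \<Rightarrow> 'k::comm_ring_1 dpoly" where
  "novikov_monom (V i) = Poly_Mapping.single {#(i, 0)#} 1"
| "novikov_monom (M s u) = novikov (novikov_monom s) (novikov_monom u)"

definition novikov_hom :: "'k::field npoly \<Rightarrow> 'k dpoly" where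
  "novikov_hom p = lin_ext dpoly_scale novikov_monom p"

lemma novikov_hom_add:
  "fin_supp p \<Longrightarrow> fin_supp q \<Longrightarrow> novikov_hom (p + q) = novikov_hom p + novikov_hom q"
  by (simp add: novikov_hom_def fin_supp_def dpoly_scale.lin_ext_add)

lemma novikov_hom_psc: "fin_supp p \<Longrightarrow> novikov_hom (psc c p) = dpoly_scale c (novikov_hom p)"
  by (simp add: novikov_hom_def fin_supp_def psc_def dpoly_scale.lin_ext_scale)

lemma novikov_hom_minus:
  assumes "fin_supp p" "fin_supp q"
  shows "novikov_hom (p - q) = novikov_hom p - novikov_hom q"
  using novikov_hom_add[of p "- q"] assms
  by (simp add: fin_supp_uminus novikov_hom_def dpoly_scale.lin_ext_uminus)

lemma novikov_hom_sum:
  "(\<And>i. i \<in> I \<Longrightarrow> fin_supp (g i)) \<Longrightarrow> novikov_hom (\<Sum>i\<in>I. g i) = (\<Sum>i\<in>I. novikov_hom (g i))"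
proof (induction I rule: infinite_finite_induct)
  case (insert i I)
  have "novikov_hom (\<Sum>i\<in>insert i I. g i) = novikov_hom (g i + (\<Sum>i\<in>I. g i))"
    by (simp only: sum.insert[OF insert.hyps])
  also have "\<dots> = novikov_hom (g i) + novikov_hom (\<Sum>i\<in>I. g i)"
    using insert.prems by (intro novikov_hom_add fin_supp_sum) auto
  also have "\<dots> = novikov_hom (g i) + (\<Sum>i\<in>I. novikov_hom (g i))"
    using insert.prems by (simp add: insert.IH)
  also have "\<dots> = (\<Sum>i\<in>insert i I. novikov_hom (g i))"
    by (simp only: sum.insert[OF insert.hyps])
  finally show ?case .
qed (simp_all add: novikov_hom_def lin_ext_def)

lemma novikov_hom_pbasis: "novikov_hom (pbasis t) = novikov_monom t"
  unfolding novikov_hom_def pbasis_def by (simp add: dpoly_scale.lin_ext_delta)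

lemma novikov_hom_pmul:
  assumes "fin_supp p" "fin_supp q"
  shows "novikov_hom (pmul p q) = novikov (novikov_hom p) (novikov_hom q)"
proof -
  let ?P = "{s. p s \<noteq> 0}" and ?Q = "{u. q u \<noteq> 0}" and ?M = "\<lambda>(s, u). M s u"
  have fin: "finite ?P" "finite ?Q"
    using assms by (auto simp: fin_supp_def)
  have "novikov_hom (pmul p q) = (\<Sum>t\<in>?M ` (?P \<times> ?Q). dpoly_scale (pmul p q t) (novikov_monom t))"
    unfolding novikov_hom_def
    by (rule dpoly_scale.lin_ext_eq_sum) (use fin support_pmul_subset in auto)
  also have "\<dots> =
      (\<Sum>(s, u)\<in>?P \<times> ?Q. dpoly_scale (p s * q u) (novikov (novikov_monom s) (novikov_monom u)))"
    by (subst sum.reindex) (auto simp: inj_on_def pmul_def intro!: sum.cong)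
  also have "\<dots> = (\<Sum>s\<in>?P. dpoly_scale (p s) (novikov_monom s))
      * dpoly_deriv (\<Sum>u\<in>?Q. dpoly_scale (q u) (novikov_monom u))"
    by (simp add: sum.cartesian_product[symmetric] sum_product dpoly_deriv.sum dpoly_deriv_scale
        novikov_def mult.commute flip: dpoly_scale_mult_left dpoly_scale_mult_right)
  also have "\<dots> = novikov (novikov_hom p) (novikov_hom q)"
    by (simp add: novikov_hom_def lin_ext_def novikov_def)
  finally show ?thesis .
qed

lemma novikov_hom_LSB1_ideal: "p \<in> LSB1_ideal \<Longrightarrow> fin_supp p \<and> novikov_hom p = 0"
proof (induction rule: LSB1_ideal.induct)
  case (gen_ls a b c)
  let ?N = novikov_hom and ?D = dpoly_deriv
  have fin: "fin_supp (lsym_rel a b c)"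
    unfolding lsym_rel_def passoc_def psub_eq_minus
    using gen_ls by (simp add: fin_supp_pmul fin_supp_minus)
  have "?N (lsym_rel a b c) =
      (?N a * ?D (?N b)) * ?D (?N c) - ?N a * ?D (?N b * ?D (?N c))
      - ((?N b * ?D (?N a)) * ?D (?N c) - ?N b * ?D (?N a * ?D (?N c)))"
    unfolding lsym_rel_def passoc_def psub_eq_minus
    using gen_ls
    by (simp add: fin_supp_pmul fin_supp_minus novikov_hom_minus novikov_hom_pmul novikov_def)
  also have "\<dots> = 0"
    using derivation_product_left_symmetric[OF dpoly_deriv_mult, of "?N a" "?N b" "?N c"] by simp
  finally show ?case
    using fin by blast
next
  case (gen_B1 a b c)
  let ?N = novikov_hom and ?D = dpoly_deriv
  have fin: "fin_supp (B1_rel a b c)"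
    unfolding B1_rel_def psub_eq_minus padd_eq_plus
    using gen_B1 by (simp add: fin_supp_pmul fin_supp_minus fin_supp_plus)
  have "?N (B1_rel a b c) =
      ((?N a * ?D (?N b)) * ?D (?N c) - (?N b * ?D (?N a)) * ?D (?N c))
      + (((?N c * ?D (?N a)) * ?D (?N b) - (?N a * ?D (?N c)) * ?D (?N b))
      + ((?N b * ?D (?N c)) * ?D (?N a) - (?N c * ?D (?N b)) * ?D (?N a)))"
    unfolding B1_rel_def psub_eq_minus padd_eq_plus
    using gen_B1 by (simp add: fin_supp_pmul fin_supp_minus fin_supp_plus novikov_hom_add
        novikov_hom_minus novikov_hom_pmul novikov_def)
  also have "\<dots> = 0" \<comment> \<open>\<open>(a o b) o c = a b' c'\<close> is symmetric in \<open>b\<close> and \<open>c\<close>\<close>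
    by (simp add: algebra_simps)
  finally show ?case
    using fin by blast
next
  case zero
  then show ?case
    by (simp add: pzero_def fin_supp_def novikov_hom_def lin_ext_def)
next
  case (add p q)
  then have "fin_supp (p + q) \<and> novikov_hom (p + q) = 0"
    by (simp add: fin_supp_plus novikov_hom_add)
  then show ?case
    by (simp only: padd_eq_plus)
next
  case (smult p c)
  then show ?case
    by (simp add: fin_supp_psc novikov_hom_psc)
next
  case (mult_left p a)
  then show ?case
    by (simp add: fin_supp_pmul novikov_hom_pmul novikov_def)
next
  case (mult_right p a)
  then show ?case
    by (simp add: fin_supp_pmul novikov_hom_pmul novikov_def)
qed

fun commutator_monom :: "mon \<Rightarrow> 'k::comm_ring_1 dpoly" where
  "commutator_monom (V i) = Poly_Mapping.single {#(i, 0)#} 1"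
| "commutator_monom (M s u) =
     novikov (commutator_monom s) (commutator_monom u)
     - novikov (commutator_monom u) (commutator_monom s)"

lemma novikov_hom_mev_pcomm:
  "fin_supp (mev pcomm (\<lambda>i. pbasis (V i) :: 'k::field npoly) t) \<and>
   novikov_hom (mev pcomm (\<lambda>i. pbasis (V i) :: 'k npoly) t) = commutator_monom t"
proof (induction t)
  case (V i)
  show ?case
    by (simp add: fin_supp_pbasis novikov_hom_pbasis)
next
  case (M s u)
  let ?e = "mev pcomm (\<lambda>i. pbasis (V i) :: 'k npoly)"
  have eq: "?e (M s u) = pmul (?e s) (?e u) - pmul (?e u) (?e s)"
    by (simp only: mev.simps pcomm_eq)
  have "fin_supp (pmul (?e s) (?e u) - pmul (?e u) (?e s))"
    using M by (simp add: fin_supp_pmul fin_supp_minus)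
  moreover have "novikov_hom (pmul (?e s) (?e u) - pmul (?e u) (?e s)) = commutator_monom (M s u)"
    using M by (simp add: fin_supp_pmul novikov_hom_minus novikov_hom_pmul)
  ultimately show ?case
    unfolding eq by blast
qed

lemma pev_eq_lin_ext: "pev op \<sigma> f = lin_ext psc (mev op \<sigma>) f"
  by (simp add: pev_def lin_ext_def psc_def fun_eq_iff sum_apply)

lemma commutator_image_identity_eq_0:
  fixes f :: "'k::field npoly"
  assumes "fin_supp f" "is_identity_LSB1_comm f"
  shows "lin_ext dpoly_scale commutator_monom f = 0"
proof -
  let ?\<sigma> = "\<lambda>i. pbasis (V i) :: 'k npoly"
  have "pev pcomm ?\<sigma> f \<in> LSB1_ideal"
    using assms(2) by (simp add: is_identity_LSB1_comm_def fin_supp_pbasis)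
  then have "novikov_hom (pev pcomm ?\<sigma> f) = 0"
    by (simp add: novikov_hom_LSB1_ideal)
  moreover have "novikov_hom (pev pcomm ?\<sigma> f) = lin_ext dpoly_scale commutator_monom f"
  proof -
    have "novikov_hom (pev pcomm ?\<sigma> f) = (\<Sum>t | f t \<noteq> 0. novikov_hom (psc (f t) (mev pcomm ?\<sigma> t)))"
      unfolding pev_eq_lin_ext lin_ext_def
      by (rule novikov_hom_sum) (simp add: fin_supp_psc novikov_hom_mev_pcomm)
    then show ?thesis
      by (simp add: lin_ext_def novikov_hom_psc novikov_hom_mev_pcomm)
  qed
  ultimately show ?thesis
    by simp
qed

lemma image_mset_cong_fundef [fundef_cong]:
  "A = B \<Longrightarrow> (\<And>x. x \<in># B \<Longrightarrow> f x = g x) \<Longrightarrow> image_mset f A = image_mset g B"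
  by (blast intro: image_mset_cong)

(* The sum of G over all orderings of m, counted with multiplicity; unlike a sum over the
   distinct orderings it commutes with renaming the elements (sym_sum_image_mset). *)
function sym_sum :: "('a list \<Rightarrow> 'b::comm_monoid_add) \<Rightarrow> 'a multiset \<Rightarrow> 'b" where
  "sym_sum G m = (if m = {#} then G [] else (\<Sum>x\<in>#m. sym_sum (\<lambda>r. G (x # r)) (m - {#x#})))"
  by auto
termination
  by (relation "measure (\<lambda>(G, m). size m)") (auto simp: size_Diff1_less)

declare sym_sum.simps [simp del]

lemma sym_sum_empty [simp]: "sym_sum G {#} = G []"
  by (simp add: sym_sum.simps)

lemma sym_sum_nonempty:
  "m \<noteq> {#} \<Longrightarrow> sym_sum G m = (\<Sum>x\<in>#m. sym_sum (\<lambda>r. G (x # r)) (m - {#x#}))"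
  by (simp add: sym_sum.simps)

lemma sym_sum_image_mset: "sym_sum G (image_mset g m) = sym_sum (\<lambda>r. G (map g r)) m"
proof (induction "size m" arbitrary: m G rule: less_induct)
  case less
  show ?case
  proof (cases "m = {#}")
    case False
    have "sym_sum G (image_mset g m)
        = (\<Sum>x\<in>#m. sym_sum (\<lambda>r. G (g x # r)) (image_mset g (m - {#x#})))"
      using False
      by (auto simp: sym_sum_nonempty image_mset.compositionality image_mset_Diff
          intro!: arg_cong[where f = sum_mset] image_mset_cong)
    also have "\<dots> = (\<Sum>x\<in>#m. sym_sum (\<lambda>r. G (map g (x # r))) (m - {#x#}))"
      by (intro arg_cong[where f = sum_mset] image_mset_cong) (simp add: less size_Diff1_less)
    also have "\<dots> = sym_sum (\<lambda>r. G (map g r)) m"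
      using False by (simp add: sym_sum_nonempty)
    finally show ?thesis .
  qed simp
qed

function sym_list :: "('a list \<Rightarrow> 'c list) \<Rightarrow> 'a list \<Rightarrow> 'c list" where
  "sym_list G [] = G []"
| "sym_list G (y # ys) = concat (map (\<lambda>x. sym_list (\<lambda>r. G (x # r)) (remove1 x (y # ys))) (y # ys))"
  by pat_completeness auto
termination
  by (relation "measure (\<lambda>(G, l). length l)") (auto simp: length_remove1 dest: length_pos_if_in_set)

lemma sum_list_concat: "sum_list (concat xss) = sum_list (map sum_list xss)"
  by (induction xss) simp_all

lemma sum_list_map_eq_sum_mset: "sum_list (map f xs) = (\<Sum>x\<in>#mset xs. f x)"
  by (simp flip: sum_mset_sum_list)

lemma sum_list_sym_list:
  "sum_list (map h (sym_list G l)) = sym_sum (\<lambda>r. sum_list (map h (G r))) (mset l)"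
proof (induction G l rule: sym_list.induct)
  case (2 G y ys)
  let ?l = "y # ys" and ?H = "\<lambda>G r. sum_list (map h (G r))"
  have "sum_list (map h (sym_list G ?l))
      = (\<Sum>x\<leftarrow>?l. sum_list (map h (sym_list (\<lambda>r. G (x # r)) (remove1 x ?l))))"
    by (simp only: sym_list.simps map_concat sum_list_concat map_map comp_def)
  also have "\<dots> = (\<Sum>x\<leftarrow>?l. sym_sum (?H (\<lambda>r. G (x # r))) (mset ?l - {#x#}))"
    by (rule arg_cong[where f = sum_list], rule map_cong[OF refl]) (simp only: 2 mset_remove1)
  also have "\<dots> = (\<Sum>x\<in>#mset ?l. sym_sum (?H (\<lambda>r. G (x # r))) (mset ?l - {#x#}))"
    by (rule sum_list_map_eq_sum_mset)
  also have "\<dots> = sym_sum (?H G) (mset ?l)"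
    by (rule sym_sum_nonempty[symmetric]) simp
  finally show ?case .
qed simp

lemma sym_list_map: "sym_list (\<lambda>r. map f (G r)) l = map f (sym_list G l)"
proof (induction G l rule: sym_list.induct)
  case (2 G y ys)
  then show ?case
    by (simp only: sym_list.simps map_concat map_map comp_def cong: map_cong)
qed simp

section \<open>The retraction\<close>

definition lincomb :: "(int \<times> mon) list \<Rightarrow> 'k::field npoly" where
  "lincomb xs = sum_list (map (\<lambda>(c, t). psc (of_int c) (pbasis t)) xs)"

lemma lincomb_Nil [simp]: "lincomb [] = 0"
  by (simp add: lincomb_def)

lemma lincomb_Cons [simp]: "lincomb ((c, t) # xs) = psc (of_int c) (pbasis t) + lincomb xs"
  by (simp add: lincomb_def)

lemma lincomb_append [simp]: "lincomb (xs @ ys) = lincomb xs + lincomb ys"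
  by (simp add: lincomb_def)

lemma lincomb_concat: "lincomb (concat xss) = sum_list (map lincomb xss)"
  by (induction xss) simp_all

lemma psc_sum_list: "psc c (sum_list ps) = sum_list (map (psc c) ps)"
  by (induction ps) (simp_all add: psc_def fun_eq_iff distrib_left)

lemma lincomb_scale: "lincomb (map (\<lambda>(d, t). (c * d, t)) xs) = psc (of_int c) (lincomb xs)"
  unfolding lincomb_def psc_sum_list map_map
  by (rule arg_cong[where f = sum_list], rule map_cong) auto

(* The coefficients are chosen so that the retraction sends commutator_monom t to 12 t modulo
   Lie_ideal whenever mdeg t <= 4 (retraction_commutator_monom). *)
definition retract_word :: "(nat \<times> nat) list \<Rightarrow> (int \<times> mon) list" where
  "retract_word l = (let x = (\<lambda>i. V (fst (l ! i))) in
     if map snd l = [0] then [(12, x 0)]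
     else if map snd l = [1, 0] then [(-6, M (x 0) (x 1))]
     else if map snd l = [2, 0, 0] then [(4, M (M (x 0) (x 1)) (x 2))]
     else if map snd l = [2, 1, 0, 0] then [(-3, M (M (M (x 0) (x 1)) (x 2)) (x 3))]
     else [])"

definition retraction :: "'k::field dpoly \<Rightarrow> 'k npoly" where
  "retraction p = lin_ext psc (sym_sum (\<lambda>l. lincomb (retract_word l))) (Poly_Mapping.lookup p)"

interpretation retraction: module_hom dpoly_scale psc "retraction :: 'k::field dpoly \<Rightarrow> 'k npoly"
  by unfold_locales
    (simp_all add: retraction_def lookup_plus_fun lookup_dpoly_scale
      psc.lin_ext_add psc.lin_ext_scale)

lemma retraction_single:
  "retraction (Poly_Mapping.single m c) = psc c (sym_sum (\<lambda>l. lincomb (retract_word l)) m)"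
proof -
  have "Poly_Mapping.lookup (Poly_Mapping.single m c) = (\<lambda>a. if a = m then c else 0)"
    by (auto simp: lookup_single when_def)
  then show ?thesis
    by (simp add: retraction_def psc.lin_ext_delta)
qed

(* Integer combinations of words over (variable, derivative) pairs give an executable
   representation of differential polynomials. *)
definition dpoly_of :: "(int \<times> (nat \<times> nat) list) list \<Rightarrow> 'k::comm_ring_1 dpoly" where
  "dpoly_of xs = sum_list (map (\<lambda>(c, l). Poly_Mapping.single (mset l) (of_int c)) xs)"

definition terms_mult ::
  "(int \<times> (nat \<times> nat) list) list \<Rightarrow> (int \<times> (nat \<times> nat) list) list \<Rightarrow> (int \<times> (nat \<times> nat) list) list"
  where "terms_mult xs ys = concat (map (\<lambda>(c, l). map (\<lambda>(d, l'). (c * d, l @ l')) ys) xs)"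

definition terms_deriv :: "(int \<times> (nat \<times> nat) list) list \<Rightarrow> (int \<times> (nat \<times> nat) list) list" where
  "terms_deriv xs = concat (map (\<lambda>(c, l). map (\<lambda>i. (c, l[i := dshift (l ! i)])) [0..<length l]) xs)"

definition terms_uminus :: "(int \<times> 'a) list \<Rightarrow> (int \<times> 'a) list" where
  "terms_uminus xs = map (\<lambda>(c, l). (- c, l)) xs"

fun commutator_terms :: "mon \<Rightarrow> (int \<times> (nat \<times> nat) list) list" where
  "commutator_terms (V i) = [(1, [(i, 0)])]"
| "commutator_terms (M s u) =
     terms_mult (commutator_terms s) (terms_deriv (commutator_terms u))
     @ terms_uminus (terms_mult (commutator_terms u) (terms_deriv (commutator_terms s)))"

lemma dpoly_of_Nil [simp]: "dpoly_of [] = 0"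
  by (simp add: dpoly_of_def)

lemma dpoly_of_Cons [simp]:
  "dpoly_of ((c, l) # xs) = Poly_Mapping.single (mset l) (of_int c) + dpoly_of xs"
  by (simp add: dpoly_of_def)

lemma dpoly_of_append [simp]: "dpoly_of (xs @ ys) = dpoly_of xs + dpoly_of ys"
  by (simp add: dpoly_of_def)

lemma dpoly_of_uminus: "dpoly_of (terms_uminus xs) = - dpoly_of xs"
  by (induction xs) (auto simp: terms_uminus_def dpoly_of_def single_uminus)

lemma dpoly_of_mult: "dpoly_of (terms_mult xs ys) = dpoly_of xs * dpoly_of ys"
proof -
  have single_mult: "dpoly_of (map (\<lambda>(d, l'). (c * d, l @ l')) ys)
      = Poly_Mapping.single (mset l) (of_int c) * dpoly_of ys" for c l
    by (induction ys) (auto simp: dpoly_of_def distrib_left mult_single)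
  show ?thesis
    by (induction xs) (auto simp: terms_mult_def distrib_right single_mult)
qed

lemma monom_deriv_mset:
  "(monom_deriv (mset l) :: 'k::comm_ring_1 dpoly) =
     sum_list (map (\<lambda>i. Poly_Mapping.single (mset (l[i := dshift (l ! i)])) 1) [0..<length l])"
proof -
  have "(monom_deriv (mset l) :: 'k dpoly)
      = sum_list (map (\<lambda>x. Poly_Mapping.single (add_mset (dshift x) (mset l - {#x#})) 1) l)"
    by (simp add: monom_deriv_def sum_list_map_eq_sum_mset)
  also have "map (\<lambda>x. Poly_Mapping.single (add_mset (dshift x) (mset l - {#x#})) (1::'k)) l
      = map (\<lambda>i. Poly_Mapping.single (mset (l[i := dshift (l ! i)])) 1) [0..<length l]"
    by (rule nth_equalityI) (simp_all add: mset_update)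
  finally show ?thesis .
qed

lemma dpoly_scale_sum_list: "dpoly_scale c (sum_list ps) = sum_list (map (dpoly_scale c) ps)"
  by (induction ps) (simp_all add: dpoly_scale.scale_right_distrib)

lemma dpoly_of_deriv: "dpoly_of (terms_deriv xs) = dpoly_deriv (dpoly_of xs)"
proof (induction xs)
  case (Cons a xs)
  obtain c l where "a = (c, l)"
    by force
  moreover have "dpoly_of (map (\<lambda>i. (c, l[i := dshift (l ! i)])) [0..<length l])
      = dpoly_deriv (Poly_Mapping.single (mset l) (of_int c))"
    by (simp add: dpoly_of_def dpoly_deriv_single monom_deriv_mset dpoly_scale_sum_list
        dpoly_scale_single comp_def)
  ultimately show ?case
    using Cons by (simp add: terms_deriv_def dpoly_deriv_add)
qed (simp add: terms_deriv_def dpoly_of_def)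

lemma dpoly_of_commutator_terms: "dpoly_of (commutator_terms t) = commutator_monom t"
  by (induction t)
    (simp_all add: dpoly_of_def[of "[_]"] dpoly_of_mult dpoly_of_deriv dpoly_of_uminus novikov_def)

definition retraction_terms :: "(int \<times> (nat \<times> nat) list) list \<Rightarrow> (int \<times> mon) list" where
  "retraction_terms xs =
     concat (map (\<lambda>(c, l). map (\<lambda>(d, t). (c * d, t)) (sym_list retract_word l)) xs)"

lemma lincomb_sym_list: "lincomb (sym_list G l) = sym_sum (\<lambda>r. lincomb (G r)) (mset l)"
  unfolding lincomb_def by (rule sum_list_sym_list)

lemma retraction_dpoly_of: "retraction (dpoly_of xs) = lincomb (retraction_terms xs)"
proof (induction xs)
  case Nil
  show ?case
    by (simp add: retraction_terms_def)
next
  case (Cons a xs)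
  obtain c l where a: "a = (c, l)"
    by force
  have single: "retraction (Poly_Mapping.single (mset l) (of_int c))
      = lincomb (map (\<lambda>(d, t). (c * d, t)) (sym_list retract_word l))"
    by (simp add: retraction_single lincomb_scale lincomb_sym_list)
  show ?case
    by (simp only: a dpoly_of_Cons retraction.add single Cons.IH) (simp add: retraction_terms_def)
qed

lemma lincomb_uminus: "lincomb (terms_uminus xs) = - lincomb xs"
  by (induction xs) (auto simp: terms_uminus_def psc_def fun_eq_iff)

lemma terms_mult_rename:
  "terms_mult (map (apsnd (map f)) xs) (map (apsnd (map f)) ys)
     = map (apsnd (map f)) (terms_mult xs ys)"
  by (simp add: terms_mult_def map_concat comp_def split_def)

lemma terms_deriv_rename:
  "terms_deriv (map (apsnd (map (apfst \<rho>))) xs) = map (apsnd (map (apfst \<rho>))) (terms_deriv xs)"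
  by (auto simp: terms_deriv_def map_concat comp_def split_def dshift_def map_update
      intro!: arg_cong[where f = concat])

lemma terms_uminus_rename: "terms_uminus (map (apsnd f) xs) = map (apsnd f) (terms_uminus xs)"
  by (simp add: terms_uminus_def comp_def split_def)

lemma commutator_terms_rename:
  "commutator_terms (rename_mon \<rho> t) = map (apsnd (map (apfst \<rho>))) (commutator_terms t)"
  by (induction t) (simp_all add: terms_mult_rename terms_deriv_rename terms_uminus_rename)

lemma retract_word_rename:
  "retract_word (map (apfst \<rho>) l) = map (apsnd (rename_mon \<rho>)) (retract_word l)"
  by (auto simp: retract_word_def Let_def length_Suc_conv)

lemma lincomb_retraction_terms_rename:
  "lincomb (retraction_terms (map (apsnd (map (apfst \<rho>))) xs))
     = lincomb (map (apsnd (rename_mon \<rho>)) (retraction_terms xs))"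
proof -
  have word: "lincomb (sym_list retract_word (map (apfst \<rho>) l))
      = lincomb (map (apsnd (rename_mon \<rho>)) (sym_list retract_word l))" for l
    by (simp add: lincomb_sym_list mset_map sym_sum_image_mset retract_word_rename
        flip: sym_list_map)
  have scaled: "lincomb (map (\<lambda>(d, t). (c * d, t)) (sym_list retract_word (map (apfst \<rho>) l)))
      = lincomb (map (apsnd (rename_mon \<rho>)) (map (\<lambda>(d, t). (c * d, t)) (sym_list retract_word l)))"
    for c l
  proof -
    have "map (apsnd (rename_mon \<rho>)) (map (\<lambda>(d, t). (c * d, t)) ys)
        = map (\<lambda>(d, t). (c * d, t)) (map (apsnd (rename_mon \<rho>)) ys)" for ys :: "(int \<times> mon) list"
      by (simp add: comp_def split_def)
    then show ?thesis
      by (simp only: lincomb_scale word)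
  qed
  show ?thesis
    unfolding retraction_terms_def map_concat lincomb_concat map_map
    by (rule arg_cong[where f = sum_list], rule map_cong[OF refl]) (auto simp: scaled)
qed

section \<open>Certificates\<close>

datatype 'a lie_rel = Anti 'a 'a | Jacobi 'a 'a 'a | LMul 'a "'a lie_rel"

fun lie_rel_terms :: "mon lie_rel \<Rightarrow> (int \<times> mon) list" where
  "lie_rel_terms (Anti x y) = [(1, M x y), (1, M y x)]"
| "lie_rel_terms (Jacobi x y z) = [(1, M (M x y) z), (1, M (M y z) x), (1, M (M z x) y)]"
| "lie_rel_terms (LMul w r) = map (apsnd (M w)) (lie_rel_terms r)"

lemma lincomb_map_M_left: "lincomb (map (apsnd (M w)) xs) = pmul (pbasis w) (lincomb xs)"
proof (induction xs)
  case Nil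
  show ?case
    by (simp add: pmul_def fun_eq_iff split: mon.split)
next
  case (Cons a xs)
  then show ?case
    by (cases a)
      (simp only: list.map apsnd_conv lincomb_Cons pmul_add_right pmul_psc_right pmul_pbasis)
qed

lemma lincomb_lie_rel_terms: "lincomb (lie_rel_terms r) \<in> Lie_ideal"
proof (induction r)
  case (Anti x y)
  have eq: "lincomb (lie_rel_terms (Anti x y)) =
      padd (pmul (pbasis x) (pbasis y)) (pmul (pbasis y) (pbasis x))"
    by (simp add: pmul_pbasis padd_eq_plus)
  show ?case
    unfolding eq by (intro Lie_ideal.gen_anti fin_supp_pbasis)
next
  case (Jacobi x y z)
  have eq: "lincomb (lie_rel_terms (Jacobi x y z)) =
      padd (pmul (pmul (pbasis x) (pbasis y)) (pbasis z))
        (padd (pmul (pmul (pbasis y) (pbasis z)) (pbasis x))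
          (pmul (pmul (pbasis z) (pbasis x)) (pbasis y)))"
    by (simp add: pmul_pbasis padd_eq_plus add.assoc)
  show ?case
    unfolding eq by (intro Lie_ideal.gen_jac fin_supp_pbasis)
next
  case (LMul w r)
  then show ?case
    by (simp add: lincomb_map_M_left Lie_ideal.mult_left fin_supp_pbasis)
qed

definition cert_terms :: "(int \<times> mon lie_rel) list \<Rightarrow> (int \<times> mon) list" where
  "cert_terms cert = concat (map (\<lambda>(c, r). map (\<lambda>(d, t). (c * d, t)) (lie_rel_terms r)) cert)"

lemma lincomb_cert_terms: "lincomb (cert_terms cert) \<in> Lie_ideal"
  unfolding cert_terms_def lincomb_concat
proof (rule Lie_ideal_sum_list)
  fix p
  assume "p \<in> set (map lincomb (map (\<lambda>(c, r). map (\<lambda>(d, t). (c * d, t)) (lie_rel_terms r)) cert))"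
  then obtain c r where "p = lincomb (map (\<lambda>(d, t). (c * d, t)) (lie_rel_terms r))"
    by auto
  then show "p \<in> Lie_ideal"
    by (simp only: lincomb_scale) (intro Lie_ideal.smult lincomb_lie_rel_terms)
qed

lemma lie_rel_terms_rename:
  "lie_rel_terms (map_lie_rel (rename_mon \<rho>) r) = map (apsnd (rename_mon \<rho>)) (lie_rel_terms r)"
  by (induction r) (simp_all add: comp_def apsnd_def map_prod_def split_def)

lemma cert_terms_rename:
  "cert_terms (map (apsnd (map_lie_rel (rename_mon \<rho>))) cert)
     = map (apsnd (rename_mon \<rho>)) (cert_terms cert)"
  by (simp add: cert_terms_def lie_rel_terms_rename map_concat comp_def split_def)

definition coeff :: "(int \<times> mon) list \<Rightarrow> mon \<Rightarrow> int" where
  "coeff xs t = sum_list (map fst (filter (\<lambda>p. snd p = t) xs))"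

definition same_coeffs :: "(int \<times> mon) list \<Rightarrow> (int \<times> mon) list \<Rightarrow> bool" where
  "same_coeffs xs ys \<longleftrightarrow> (\<forall>t \<in> snd ` set (xs @ ys). coeff xs t = coeff ys t)"

lemma lincomb_eq_sum_coeff:
  assumes "finite S" "snd ` set xs \<subseteq> S"
  shows "(lincomb (map (apsnd f) xs) :: 'k::field npoly)
    = (\<Sum>t\<in>S. psc (of_int (coeff xs t)) (pbasis (f t)))"
  using assms(2)
proof (induction xs)
  case Nil
  show ?case
    by (simp add: coeff_def)
next
  case (Cons a xs)
  obtain c u where a: "a = (c, u)"
    by force
  with Cons.prems have "u \<in> S"
    by auto
  have "(lincomb (map (apsnd f) (a # xs)) :: 'k npoly)
      = psc (of_int c) (pbasis (f u)) + lincomb (map (apsnd f) xs)"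
    by (simp add: a)
  also have "(lincomb (map (apsnd f) xs) :: 'k npoly)
      = (\<Sum>t\<in>S. psc (of_int (coeff xs t)) (pbasis (f t)))"
    by (rule Cons.IH) (use Cons.prems in auto)
  also have "psc (of_int c) (pbasis (f u) :: 'k npoly)
      = (\<Sum>t\<in>S. psc (of_int (if t = u then c else 0)) (pbasis (f t)))"
    using \<open>u \<in> S\<close> assms(1)
    by (simp add: if_distrib[of "\<lambda>c. psc (of_int c) _"] sum.delta cong: if_cong)
  also have "\<dots> + (\<Sum>t\<in>S. psc (of_int (coeff xs t)) (pbasis (f t)))
      = (\<Sum>t\<in>S. psc (of_int (coeff (a # xs) t)) (pbasis (f t)))"
    unfolding sum.distrib[symmetric] psc.scale_left_distrib[symmetric]
    by (rule sum.cong[OF refl]) (auto simp: coeff_def a)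
  finally show ?case .
qed

lemma lincomb_eq_if_same_coeffs:
  assumes "same_coeffs xs ys"
  shows "(lincomb (map (apsnd f) xs) :: 'k::field npoly) = lincomb (map (apsnd f) ys)"
proof -
  let ?S = "snd ` set (xs @ ys)"
  have "(lincomb (map (apsnd f) xs) :: 'k npoly)
      = (\<Sum>t\<in>?S. psc (of_int (coeff xs t)) (pbasis (f t)))"
    by (rule lincomb_eq_sum_coeff) auto
  also have "\<dots> = (\<Sum>t\<in>?S. psc (of_int (coeff ys t)) (pbasis (f t)))"
  proof (rule sum.cong[OF refl])
    fix t
    assume "t \<in> ?S"
    with assms have "coeff xs t = coeff ys t"
      unfolding same_coeffs_def by blast
    then show "psc (of_int (coeff xs t)) (pbasis (f t))
        = (psc (of_int (coeff ys t)) (pbasis (f t)) :: 'k npoly)"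
      by simp
  qed
  also have "\<dots> = lincomb (map (apsnd f) ys)"
    by (rule lincomb_eq_sum_coeff[symmetric]) auto
  finally show ?thesis .
qed

definition retraction_defect :: "mon \<Rightarrow> (int \<times> mon) list" where
  "retraction_defect t = (12, t) # terms_uminus (retraction_terms (commutator_terms t))"

lemma retraction_commutator_monom_certified:
  assumes "same_coeffs (retraction_defect t) (cert_terms cert)"
  shows "psc (12::'k::field) (pbasis (rename_mon \<rho> t)) - retraction (commutator_monom (rename_mon \<rho> t))
    \<in> Lie_ideal"
proof -
  let ?r = "map (apsnd (rename_mon \<rho>))"
  have "psc (12::'k) (pbasis (rename_mon \<rho> t)) - retraction (commutator_monom (rename_mon \<rho> t))
      = lincomb (?r (retraction_defect t))"
    by (simp add: retraction_defect_def lincomb_uminus lincomb_retraction_terms_rename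
        retraction_dpoly_of commutator_terms_rename flip: terms_uminus_rename dpoly_of_commutator_terms)
  also have "\<dots> = lincomb (?r (cert_terms cert))"
    using assms by (rule lincomb_eq_if_same_coeffs)
  also have "\<dots> = lincomb (cert_terms (map (apsnd (map_lie_rel (rename_mon \<rho>))) cert))"
    by (simp add: cert_terms_rename)
  finally show ?thesis
    using lincomb_cert_terms by simp
qed

fun relabel :: "nat \<Rightarrow> mon \<Rightarrow> mon" where
  "relabel k (V i) = V k"
| "relabel k (M s u) = M (relabel k s) (relabel (k + mdeg s) u)"

fun leaves :: "mon \<Rightarrow> nat list" where
  "leaves (V i) = [i]"
| "leaves (M s u) = leaves s @ leaves u"

lemma length_leaves: "length (leaves t) = mdeg t"
  by (induction t) simp_all

lemma mdeg_pos: "mdeg t > 0"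
  by (induction t) simp_all

lemma rename_relabel:
  "(\<And>j. j < mdeg t \<Longrightarrow> \<rho> (k + j) = leaves t ! j) \<Longrightarrow> rename_mon \<rho> (relabel k t) = t"
proof (induction t arbitrary: k)
  case (M s u)
  have "rename_mon \<rho> (relabel k s) = s"
    using M.prems by (intro M.IH(1)) (simp add: nth_append length_leaves)
  moreover have "rename_mon \<rho> (relabel (k + mdeg s) u) = u"
    using M.prems[of "mdeg s + _"] by (intro M.IH(2)) (simp add: nth_append length_leaves add.assoc)
  ultimately show ?case
    by simp
qed simp

function shapes :: "nat \<Rightarrow> nat \<Rightarrow> mon list" where
  "shapes k n = (if n \<le> 1 then [V k] else
     concat (map (\<lambda>i. concat (map (\<lambda>s. map (M s) (shapes (k + i) (n - i))) (shapes k i))) [1..<n]))"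
  by auto
termination
  by (relation "measure snd") auto

declare shapes.simps [simp del]

lemma relabel_in_shapes: "relabel k t \<in> set (shapes k (mdeg t))"
proof (induction t arbitrary: k)
  case (V i)
  show ?case
    by (simp add: shapes.simps)
next
  case (M s u)
  then show ?case
    using mdeg_pos[of s] mdeg_pos[of u]
    by (subst shapes.simps) (force simp: image_iff)
qed

(* For every tree shape t with leaves labelled 0, 1, ... from left to right, an integer
   combination of instances of anticommutativity and Jacobi that equals
   12 t - retraction (commutator_monom t). *)
definition certificates :: "(mon \<times> (int \<times> mon lie_rel) list) list" where
  "certificates =
   [(V 0, []),
    (M (V 0) (V 1),
      [(6, Anti (V 0) (V 1))]),
    (M (M (V 0) (V 1)) (V 2),
      [(-8, Anti (V 1) (M (V 0) (V 2))), (-8, Anti (V 1) (M (V 2) (V 0))),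
       (-4, Anti (V 0) (M (V 1) (V 2))), (8, Jacobi (V 0) (V 1) (V 2)),
       (-4, Anti (V 0) (M (V 2) (V 1))), (4, Jacobi (V 0) (V 2) (V 1)),
       (4, LMul (V 0) (Anti (V 1) (V 2))), (8, LMul (V 1) (Anti (V 0) (V 2)))]),
    (M (V 0) (M (V 1) (V 2)),
      [(-4, Anti (V 1) (M (V 0) (V 2))), (-4, Anti (V 1) (M (V 2) (V 0))),
       (4, Anti (V 0) (M (V 1) (V 2))), (-8, Anti (V 0) (M (V 2) (V 1))),
       (4, Jacobi (V 0) (V 2) (V 1)), (8, LMul (V 0) (Anti (V 1) (V 2))),
       (4, LMul (V 1) (Anti (V 0) (V 2)))]),
    (M (M (M (V 0) (V 1)) (V 2)) (V 3),
      [(3, Anti (V 2) (M (M (V 0) (V 3)) (V 1))), (-9, Anti (V 1) (M (M (V 2) (V 3)) (V 0))),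
       (-9, Anti (V 2) (M (V 3) (M (V 0) (V 1)))), (-3, Anti (V 1) (M (V 0) (M (V 2) (V 3)))),
       (-3, Anti (M (V 2) (V 0)) (M (V 1) (V 3))), (-6, Anti (V 0) (M (M (V 1) (V 3)) (V 2))),
       (-3, Anti (V 1) (M (V 3) (M (V 2) (V 0)))), (-3, Anti (V 0) (M (M (V 2) (V 3)) (V 1))),
       (-9, Anti (V 0) (M (V 1) (M (V 2) (V 3)))), (3, Jacobi (V 0) (M (V 1) (V 3)) (V 2)),
       (9, Jacobi (V 2) (V 3) (M (V 0) (V 1))), (3, Anti (V 2) (M (V 1) (M (V 0) (V 3)))),
       (3, Jacobi (V 2) (V 3) (M (V 1) (V 0))), (-3, Anti (V 2) (M (V 0) (M (V 1) (V 3)))),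
       (3, Anti (V 0) (M (V 3) (M (V 2) (V 1)))), (-3, Anti (M (V 1) (V 0)) (M (V 2) (V 3))),
       (3, Jacobi (V 1) (V 3) (M (V 2) (V 0))), (-9, Anti (M (V 0) (V 1)) (M (V 2) (V 3))),
       (3, Anti (M (V 0) (V 3)) (M (V 2) (V 1))), (6, Anti (V 1) (M (M (V 0) (V 3)) (V 2))),
       (9, LMul (V 2) (Anti (V 0) (M (V 1) (V 3)))), (3, Jacobi (V 0) (M (V 2) (V 3)) (V 1)),
       (3, LMul (V 0) (Anti (V 1) (M (V 2) (V 3)))), (-3, Jacobi (V 0) (V 3) (M (V 2) (V 1))),
       (9, Jacobi (V 0) (V 1) (M (V 2) (V 3))), (-3, Anti (V 2) (M (V 3) (M (V 1) (V 0)))),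
       (-3, Anti (V 2) (M (M (V 1) (V 3)) (V 0))), (-3, Jacobi (V 1) (M (V 0) (V 3)) (V 2)),
       (9, LMul (V 1) (Anti (V 0) (M (V 2) (V 3)))), (-3, Anti (V 2) (M (M (V 0) (V 1)) (V 3))),
       (6, LMul (V 2) (Anti (V 0) (M (V 3) (V 1)))), (3, LMul (V 2) (Anti (V 3) (M (V 1) (V 0)))),
       (3, LMul (V 1) (Anti (V 3) (M (V 2) (V 0)))), (6, LMul (V 1) (Anti (V 0) (M (V 3) (V 2)))),
       (3, Anti (V 2) (M (M (V 1) (V 0)) (V 3))), (-3, LMul (V 0) (Anti (V 3) (M (V 2) (V 1)))),
       (9, LMul (V 2) (Anti (V 3) (M (V 0) (V 1)))), (-6, LMul (V 0) (Anti (V 1) (M (V 3) (V 2)))),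
       (3, LMul (V 2) (Anti (V 1) (M (V 0) (V 3)))), (6, LMul (V 2) (Anti (V 1) (M (V 3) (V 0)))),
       (-6, LMul (V 2) (Jacobi (V 0) (V 3) (V 1))), (6, LMul (V 0) (LMul (V 1) (Anti (V 2) (V 3)))),
       (-3, Anti (V 0) (M (M (V 2) (V 1)) (V 3))), (-6, LMul (V 2) (Jacobi (V 0) (V 1) (V 3))),
       (-6, LMul (V 1) (LMul (V 0) (Anti (V 2) (V 3)))),
       (-6, LMul (V 2) (LMul (V 1) (Anti (V 0) (V 3)))),
       (-6, LMul (V 1) (Jacobi (V 0) (V 3) (V 2))), (3, Anti (V 1) (M (M (V 2) (V 0)) (V 3))),
       (-6, LMul (V 2) (LMul (V 0) (Anti (V 1) (V 3)))), (6, LMul (V 0) (Jacobi (V 1) (V 3) (V 2)))]),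
    (M (M (V 0) (M (V 1) (V 2))) (V 3),
      [(-3, Anti (V 2) (M (M (V 0) (V 3)) (V 1))), (-3, Anti (M (V 0) (V 3)) (M (V 1) (V 2))),
       (6, Anti (V 1) (M (M (V 2) (V 3)) (V 0))), (-9, Anti (V 0) (M (M (V 1) (V 2)) (V 3))),
       (3, Jacobi (V 1) (V 2) (M (V 0) (V 3))), (3, Anti (V 2) (M (V 3) (M (V 0) (V 1)))),
       (-3, Anti (V 0) (M (V 3) (M (V 1) (V 2)))), (-3, Anti (V 1) (M (V 3) (M (V 0) (V 2)))),
       (-3, Anti (V 1) (M (V 2) (M (V 0) (V 3)))), (-3, Anti (V 0) (M (M (V 1) (V 3)) (V 2))),
       (3, Jacobi (V 0) (V 3) (M (V 1) (V 2))), (3, Jacobi (V 1) (V 3) (M (V 0) (V 2))),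
       (3, Anti (V 0) (M (M (V 2) (V 3)) (V 1))), (3, Anti (V 0) (M (V 1) (M (V 2) (V 3)))),
       (-3, Jacobi (V 2) (V 3) (M (V 0) (V 1))), (3, Anti (V 2) (M (V 1) (M (V 0) (V 3)))),
       (-12, Anti (M (V 3) (V 0)) (M (V 1) (V 2))), (-12, Anti (V 1) (M (V 2) (M (V 3) (V 0)))),
       (3, Anti (V 1) (M (M (V 0) (V 2)) (V 3))), (3, Anti (V 0) (M (V 3) (M (V 2) (V 1)))),
       (3, Anti (M (V 0) (V 1)) (M (V 2) (V 3))), (3, Anti (M (V 0) (V 3)) (M (V 2) (V 1))),
       (3, LMul (V 1) (Anti (V 3) (M (V 0) (V 2)))), (3, Anti (V 1) (M (M (V 0) (V 3)) (V 2))),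
       (12, Jacobi (V 0) (M (V 1) (V 2)) (V 3)), (-9, LMul (V 0) (Anti (V 1) (M (V 2) (V 3)))),
       (-12, Anti (V 2) (M (M (V 3) (V 0)) (V 1))), (6, LMul (V 1) (Anti (V 2) (M (V 3) (V 0)))),
       (-3, Jacobi (V 0) (V 3) (M (V 2) (V 1))), (-3, Jacobi (V 0) (V 1) (M (V 2) (V 3))),
       (-6, Anti (V 2) (M (M (V 1) (V 3)) (V 0))), (-3, Jacobi (V 1) (M (V 0) (V 3)) (V 2)),
       (6, LMul (V 0) (Jacobi (V 1) (V 2) (V 3))), (-3, Anti (V 0) (M (V 2) (M (V 1) (V 3)))),
       (-6, LMul (V 0) (Anti (V 2) (M (V 3) (V 1)))), (-6, LMul (V 1) (Jacobi (V 0) (V 2) (V 3))),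
       (3, Jacobi (V 0) (V 2) (M (V 1) (V 3))), (3, LMul (V 0) (Anti (V 3) (M (V 1) (V 2)))),
       (12, Jacobi (V 1) (V 2) (M (V 3) (V 0))), (-3, Anti (M (V 0) (V 2)) (M (V 1) (V 3))),
       (-3, Anti (V 2) (M (M (V 0) (V 1)) (V 3))), (-3, LMul (V 0) (Anti (V 3) (M (V 2) (V 1)))),
       (-3, LMul (V 2) (Anti (V 3) (M (V 0) (V 1)))), (-6, LMul (V 0) (Anti (V 1) (M (V 3) (V 2)))),
       (3, LMul (V 2) (Anti (V 1) (M (V 0) (V 3)))), (6, LMul (V 2) (Anti (V 1) (M (V 3) (V 0)))),
       (-3, LMul (V 1) (Anti (V 2) (M (V 0) (V 3)))),
       (6, LMul (V 0) (LMul (V 1) (Anti (V 2) (V 3)))), (-3, Anti (V 0) (M (M (V 2) (V 1)) (V 3))),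
       (6, LMul (V 2) (Jacobi (V 0) (V 1) (V 3))), (-3, LMul (V 0) (Anti (V 2) (M (V 1) (V 3)))),
       (6, LMul (V 1) (LMul (V 2) (Anti (V 0) (V 3)))),
       (-6, LMul (V 2) (LMul (V 1) (Anti (V 0) (V 3)))),
       (6, LMul (V 0) (LMul (V 2) (Anti (V 1) (V 3)))), (6, LMul (V 0) (Jacobi (V 1) (V 3) (V 2)))]),
    (M (M (V 0) (V 1)) (M (V 2) (V 3)),
      [(-3, Anti (M (V 0) (V 3)) (M (V 1) (V 2))), (-12, Anti (V 1) (M (M (V 2) (V 3)) (V 0))),
       (3, Anti (V 0) (M (M (V 1) (V 2)) (V 3))), (3, Jacobi (V 1) (V 2) (M (V 0) (V 3))),
       (-3, Anti (V 0) (M (V 3) (M (V 1) (V 2)))), (3, Anti (V 1) (M (V 3) (M (V 0) (V 2)))),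
       (-3, Anti (V 1) (M (V 2) (M (V 0) (V 3)))), (-3, Anti (M (V 2) (V 0)) (M (V 1) (V 3))),
       (-6, Anti (V 0) (M (M (V 1) (V 3)) (V 2))), (-3, Anti (V 1) (M (V 3) (M (V 2) (V 0)))),
       (-3, Anti (V 1) (M (M (V 3) (V 0)) (V 2))), (3, Jacobi (V 0) (V 3) (M (V 1) (V 2))),
       (-3, Jacobi (V 1) (V 3) (M (V 0) (V 2))), (3, Anti (V 2) (M (M (V 3) (V 1)) (V 0))),
       (-12, Anti (V 0) (M (V 1) (M (V 2) (V 3)))), (3, Jacobi (V 0) (M (V 1) (V 3)) (V 2)),
       (3, Anti (V 2) (M (V 1) (M (V 0) (V 3)))), (-3, Anti (V 2) (M (V 0) (M (V 1) (V 3)))),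
       (-3, Anti (V 1) (M (M (V 0) (V 2)) (V 3))), (3, Anti (V 0) (M (V 3) (M (V 2) (V 1)))),
       (3, Jacobi (V 1) (V 3) (M (V 2) (V 0))), (3, Anti (M (V 0) (V 3)) (M (V 2) (V 1))),
       (-3, LMul (V 1) (Anti (V 3) (M (V 0) (V 2)))), (6, Anti (V 1) (M (M (V 0) (V 3)) (V 2))),
       (6, LMul (V 0) (Anti (V 1) (M (V 2) (V 3)))), (-3, Anti (V 2) (M (M (V 3) (V 0)) (V 1))),
       (-3, LMul (V 1) (Anti (V 2) (M (V 3) (V 0)))), (-3, Jacobi (V 0) (V 3) (M (V 2) (V 1))),
       (3, Anti (V 0) (M (M (V 3) (V 1)) (V 2))), (12, Jacobi (V 0) (V 1) (M (V 2) (V 3))),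
       (-3, Jacobi (V 1) (M (V 0) (V 3)) (V 2)), (-6, LMul (V 0) (Jacobi (V 1) (V 2) (V 3))),
       (6, LMul (V 1) (Anti (V 0) (M (V 2) (V 3)))), (3, Anti (V 0) (M (V 2) (M (V 1) (V 3)))),
       (3, LMul (V 0) (Anti (V 2) (M (V 3) (V 1)))), (6, LMul (V 1) (Jacobi (V 0) (V 2) (V 3))),
       (-3, Jacobi (V 0) (V 2) (M (V 1) (V 3))), (3, LMul (V 0) (Anti (V 3) (M (V 1) (V 2)))),
       (3, Anti (M (V 0) (V 2)) (M (V 1) (V 3))), (-3, LMul (V 2) (Anti (V 0) (M (V 3) (V 1)))),
       (3, LMul (V 1) (Anti (V 3) (M (V 2) (V 0)))), (6, LMul (V 1) (Anti (V 0) (M (V 3) (V 2)))),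
       (-3, LMul (V 0) (Anti (V 3) (M (V 2) (V 1)))), (-6, LMul (V 0) (Anti (V 1) (M (V 3) (V 2)))),
       (3, LMul (V 2) (Anti (V 1) (M (V 3) (V 0)))),
       (6, LMul (V 0) (LMul (V 1) (Anti (V 2) (V 3)))), (-3, Anti (V 0) (M (M (V 2) (V 1)) (V 3))),
       (-6, LMul (V 1) (LMul (V 0) (Anti (V 2) (V 3)))),
       (3, LMul (V 1) (LMul (V 2) (Anti (V 0) (V 3)))),
       (-3, LMul (V 2) (LMul (V 1) (Anti (V 0) (V 3)))),
       (-3, LMul (V 0) (LMul (V 2) (Anti (V 1) (V 3)))),
       (-6, LMul (V 1) (Jacobi (V 0) (V 3) (V 2))), (3, Anti (V 1) (M (M (V 2) (V 0)) (V 3))),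
       (3, LMul (V 2) (LMul (V 0) (Anti (V 1) (V 3)))), (6, LMul (V 0) (Jacobi (V 1) (V 3) (V 2)))]),
    (M (V 0) (M (M (V 1) (V 2)) (V 3)),
      [(-3, Anti (V 2) (M (M (V 0) (V 3)) (V 1))), (-3, Anti (M (V 0) (V 3)) (M (V 1) (V 2))),
       (3, Anti (V 0) (M (M (V 1) (V 2)) (V 3))), (3, Jacobi (V 1) (V 2) (M (V 0) (V 3))),
       (-3, Anti (V 0) (M (V 3) (M (V 1) (V 2)))), (-3, Anti (V 1) (M (V 2) (M (V 0) (V 3)))),
       (3, Anti (V 1) (M (V 0) (M (V 2) (V 3)))), (-3, Anti (M (V 2) (V 0)) (M (V 1) (V 3))),
       (-3, Anti (V 0) (M (M (V 1) (V 3)) (V 2))), (-3, Anti (V 1) (M (V 3) (M (V 2) (V 0)))),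
       (3, Jacobi (V 0) (V 3) (M (V 1) (V 2))), (3, Anti (V 0) (M (M (V 2) (V 3)) (V 1))),
       (-3, Anti (V 2) (M (M (V 3) (V 1)) (V 0))), (3, Jacobi (V 0) (M (V 1) (V 3)) (V 2)),
       (3, Anti (V 2) (M (V 1) (M (V 0) (V 3)))), (-3, Jacobi (V 2) (V 3) (M (V 1) (V 0))),
       (-3, Anti (V 2) (M (V 0) (M (V 1) (V 3)))), (3, Anti (V 0) (M (V 3) (M (V 2) (V 1)))),
       (3, Anti (M (V 1) (V 0)) (M (V 2) (V 3))), (3, Jacobi (V 1) (V 3) (M (V 2) (V 0))),
       (3, Anti (M (V 0) (V 3)) (M (V 2) (V 1))), (3, Anti (V 1) (M (M (V 0) (V 3)) (V 2))),
       (-3, Jacobi (V 0) (M (V 2) (V 3)) (V 1)), (-9, LMul (V 0) (Anti (V 1) (M (V 2) (V 3)))),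
       (-3, Jacobi (V 0) (V 3) (M (V 2) (V 1))), (-3, Anti (V 0) (M (M (V 3) (V 1)) (V 2))),
       (3, Anti (V 2) (M (V 3) (M (V 1) (V 0)))), (-3, Jacobi (V 1) (M (V 0) (V 3)) (V 2)),
       (6, LMul (V 0) (Jacobi (V 1) (V 2) (V 3))), (-3, LMul (V 0) (Anti (V 2) (M (V 3) (V 1)))),
       (3, LMul (V 0) (Anti (V 3) (M (V 1) (V 2)))), (-3, LMul (V 2) (Anti (V 0) (M (V 3) (V 1)))),
       (-3, LMul (V 2) (Anti (V 3) (M (V 1) (V 0)))), (3, LMul (V 1) (Anti (V 3) (M (V 2) (V 0)))),
       (3, LMul (V 1) (Anti (V 0) (M (V 3) (V 2)))), (-3, Anti (V 2) (M (M (V 1) (V 0)) (V 3))),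
       (-3, LMul (V 0) (Anti (V 3) (M (V 2) (V 1)))), (3, Anti (V 0) (M (M (V 3) (V 2)) (V 1))),
       (-9, LMul (V 0) (Anti (V 1) (M (V 3) (V 2)))), (-3, LMul (V 2) (Anti (V 1) (M (V 0) (V 3)))),
       (3, LMul (V 1) (Anti (V 2) (M (V 0) (V 3)))), (6, LMul (V 2) (Jacobi (V 0) (V 3) (V 1))),
       (9, LMul (V 0) (LMul (V 1) (Anti (V 2) (V 3)))), (-3, Anti (V 0) (M (M (V 2) (V 1)) (V 3))),
       (-3, LMul (V 0) (Anti (V 2) (M (V 1) (V 3)))),
       (-3, LMul (V 1) (LMul (V 0) (Anti (V 2) (V 3)))), (3, Anti (V 1) (M (M (V 3) (V 2)) (V 0))),
       (3, LMul (V 0) (LMul (V 2) (Anti (V 1) (V 3)))), (-6, LMul (V 1) (Jacobi (V 0) (V 3) (V 2))),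
       (3, Anti (V 1) (M (M (V 2) (V 0)) (V 3))), (3, LMul (V 2) (LMul (V 0) (Anti (V 1) (V 3)))),
       (6, LMul (V 0) (Jacobi (V 1) (V 3) (V 2)))]),
    (M (V 0) (M (V 1) (M (V 2) (V 3))),
      [(-3, Anti (V 2) (M (M (V 0) (V 3)) (V 1))), (-3, Anti (M (V 0) (V 3)) (M (V 1) (V 2))),
       (-3, Anti (V 1) (M (M (V 2) (V 3)) (V 0))), (3, Anti (V 0) (M (M (V 1) (V 2)) (V 3))),
       (3, Jacobi (V 1) (V 2) (M (V 0) (V 3))), (-3, Anti (V 0) (M (V 3) (M (V 1) (V 2)))),
       (-3, Anti (V 1) (M (V 2) (M (V 0) (V 3)))), (-3, Anti (M (V 2) (V 0)) (M (V 1) (V 3))),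
       (-6, Anti (V 0) (M (M (V 1) (V 3)) (V 2))), (-3, Anti (V 1) (M (V 3) (M (V 2) (V 0)))),
       (-3, Anti (V 1) (M (M (V 3) (V 0)) (V 2))), (3, Jacobi (V 0) (V 3) (M (V 1) (V 2))),
       (-3, Anti (V 0) (M (M (V 2) (V 3)) (V 1))), (3, Jacobi (V 0) (M (V 1) (V 3)) (V 2)),
       (-3, Anti (V 2) (M (V 0) (M (V 1) (V 3)))), (3, Jacobi (V 1) (V 3) (M (V 2) (V 0))),
       (3, LMul (V 2) (Anti (V 0) (M (V 1) (V 3)))), (9, LMul (V 0) (Anti (V 1) (M (V 2) (V 3)))),
       (-3, Anti (V 2) (M (M (V 3) (V 0)) (V 1))), (3, LMul (V 1) (Anti (V 2) (M (V 3) (V 0)))),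
       (-3, Anti (V 2) (M (M (V 1) (V 3)) (V 0))), (-6, LMul (V 0) (Jacobi (V 1) (V 2) (V 3))),
       (3, LMul (V 1) (Anti (V 0) (M (V 2) (V 3)))), (6, LMul (V 0) (Anti (V 2) (M (V 3) (V 1)))),
       (3, LMul (V 0) (Anti (V 3) (M (V 1) (V 2)))), (3, LMul (V 1) (Anti (V 3) (M (V 2) (V 0)))),
       (3, LMul (V 1) (Anti (V 0) (M (V 3) (V 2)))), (3, Anti (V 0) (M (M (V 3) (V 2)) (V 1))),
       (-3, LMul (V 0) (Anti (V 1) (M (V 3) (V 2)))), (3, LMul (V 2) (Anti (V 1) (M (V 0) (V 3)))),
       (3, LMul (V 2) (Anti (V 1) (M (V 3) (V 0)))), (6, LMul (V 1) (Anti (V 2) (M (V 0) (V 3)))),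
       (3, LMul (V 0) (LMul (V 1) (Anti (V 2) (V 3)))),
       (6, LMul (V 0) (Anti (V 2) (M (V 1) (V 3)))),
       (-3, LMul (V 1) (LMul (V 0) (Anti (V 2) (V 3)))), (3, Anti (V 1) (M (M (V 3) (V 2)) (V 0))),
       (-3, LMul (V 1) (LMul (V 2) (Anti (V 0) (V 3)))),
       (-3, LMul (V 2) (LMul (V 1) (Anti (V 0) (V 3)))),
       (-6, LMul (V 0) (LMul (V 2) (Anti (V 1) (V 3)))),
       (-6, LMul (V 1) (Jacobi (V 0) (V 3) (V 2))), (3, Anti (V 1) (M (M (V 2) (V 0)) (V 3)))])]"

lemma certificates_valid:
  "\<forall>t \<in> set (concat (map (shapes 0) [1..<5])).
     case map_of certificates t of
       None \<Rightarrow> False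
     | Some cert \<Rightarrow> same_coeffs (retraction_defect t) (cert_terms cert)"
  by code_simp

lemma retraction_commutator_monom:
  assumes "mdeg t \<le> 4"
  shows "psc (12::'k::field) (pbasis t) - retraction (commutator_monom t) \<in> Lie_ideal"
proof -
  have "relabel 0 t \<in> set (concat (map (shapes 0) [1..<5]))"
    using relabel_in_shapes[of 0 t] mdeg_pos[of t] assms by auto
  then obtain cert where "same_coeffs (retraction_defect (relabel 0 t)) (cert_terms cert)"
    using certificates_valid by (auto split: option.splits)
  then have "psc (12::'k) (pbasis (rename_mon (\<lambda>j. leaves t ! j) (relabel 0 t)))
      - retraction (commutator_monom (rename_mon (\<lambda>j. leaves t ! j) (relabel 0 t))) \<in> Lie_ideal"
    by (rule retraction_commutator_monom_certified)
  then show ?thesis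
    by (simp add: rename_relabel)
qed

theorem mainTheorem8:
  fixes f :: "'k::field_char_0 npoly"
  assumes "fin_supp f"
    and "\<forall>t. f t \<noteq> 0 \<longrightarrow> mdeg t \<le> 4"
    and "is_identity_LSB1_comm f"
  shows "f \<in> Lie_ideal"
proof -
  let ?E = "\<lambda>t. psc 12 (pbasis t) - retraction (commutator_monom t)"
  have "lin_ext psc ?E f \<in> Lie_ideal"
    unfolding lin_ext_def using assms(2)
    by (intro Lie_ideal_sum Lie_ideal.smult retraction_commutator_monom) auto
  moreover have "lin_ext psc (\<lambda>t. psc 12 (pbasis t)) f = psc 12 (lin_ext psc pbasis f)"
    by (simp add: lin_ext_def psc.scale_sum_right mult.commute)
  moreover have "lin_ext psc (\<lambda>t. retraction (commutator_monom t)) f = 0"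
    using commutator_image_identity_eq_0[OF assms(1,3)] by (simp flip: retraction.lin_ext_compose)
  ultimately have "psc 12 f \<in> Lie_ideal"
    using assms(1) by (simp add: psc.lin_ext_diff lin_ext_pbasis)
  then have "psc (1 / 12) (psc 12 f) \<in> Lie_ideal"
    by (rule Lie_ideal.smult)
  then show ?thesis
    by simp
qed

end
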